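(* Let $\Gamma$ be a non-boring strongly regular graph with parameters $\mathrm{srg}(n,k,1,\mu)$. Then $C_3(\Gamma)$ is strongly regular if and only if $\Gamma$ is the (unique up to isomorphism) strongly regular graph with parameters $(9,4,1,2)$, $(15,6,1,3)$, or $(27,10,1,5)$.
   Context: $\mathrm{srg}(n,k,\lambda,\mu)$: a graph with $n$ vertices, $k$-regular, in which adjacent vertices have exactly $\lambda$ common neighbours and distinct non-adjacent vertices have exactly $\mu$ common neighbours; a graph is strongly regular if it is an srg for some parameters (equivalently, a regular graph with at most three distinct adjacency eigenvalues). An srg is boring if it has at most two distinct eigenvalues (disjoint union of equal complete graphs or the complement of one), non-boring otherwise. When $\lambda=1$ every edge lies in exactly one triangle. $C_3(\Gamma)$ is the graph whose vertices are the triangles of $\Gamma$, two distinct triangles adjacent iff they share a vertex. *)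

theory Defs
  imports "HOL-Analysis.Analysis"
begin

definition simple_graph :: "'a set \<Rightarrow> ('a \<Rightarrow> 'a \<Rightarrow> bool) \<Rightarrow> bool" where
  "simple_graph V E \<longleftrightarrow> finite V \<and> (\<forall>u\<in>V. \<forall>v\<in>V. E u v \<longleftrightarrow> E v u) \<and> (\<forall>v\<in>V. \<not> E v v)"

definition nbhd :: "'a set \<Rightarrow> ('a \<Rightarrow> 'a \<Rightarrow> bool) \<Rightarrow> 'a \<Rightarrow> 'a set" where
  "nbhd V E v = {w \<in> V. E v w}"

definition srg :: "'a set \<Rightarrow> ('a \<Rightarrow> 'a \<Rightarrow> bool) \<Rightarrow> nat \<Rightarrow> nat \<Rightarrow> nat \<Rightarrow> nat \<Rightarrow> bool" where
  "srg V E n k l m \<longleftrightarrow> simple_graph V E \<and> card V = n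
     \<and> (\<forall>v\<in>V. card (nbhd V E v) = k)
     \<and> (\<forall>u\<in>V. \<forall>v\<in>V. E u v \<longrightarrow> card (nbhd V E u \<inter> nbhd V E v) = l)
     \<and> (\<forall>u\<in>V. \<forall>v\<in>V. u \<noteq> v \<longrightarrow> \<not> E u v \<longrightarrow> card (nbhd V E u \<inter> nbhd V E v) = m)"

definition strongly_regular :: "'a set \<Rightarrow> ('a \<Rightarrow> 'a \<Rightarrow> bool) \<Rightarrow> bool" where
  "strongly_regular V E \<longleftrightarrow> (\<exists>n k l m. srg V E n k l m)"

definition adj_matrix :: "('a::finite \<Rightarrow> 'a \<Rightarrow> bool) \<Rightarrow> real^'a^'a" where
  "adj_matrix E = (\<chi> i j. if E i j then 1 else 0)"

definition adj_eigenvalues :: "('a::finite \<Rightarrow> 'a \<Rightarrow> bool) \<Rightarrow> real set" where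
  "adj_eigenvalues E = {c. \<exists>x. x \<noteq> 0 \<and> adj_matrix E *v x = c *\<^sub>R x}"

text \<open>Boring: at most two distinct adjacency eigenvalues (the adjacency matrix of a simple
  graph is real symmetric, so all its eigenvalues are real).\<close>
definition boring :: "('a::finite \<Rightarrow> 'a \<Rightarrow> bool) \<Rightarrow> bool" where
  "boring E \<longleftrightarrow> card (adj_eigenvalues E) \<le> 2"

definition triangles :: "'a set \<Rightarrow> ('a \<Rightarrow> 'a \<Rightarrow> bool) \<Rightarrow> 'a set set" where
  "triangles V E = {{a, b, c} | a b c. a \<in> V \<and> b \<in> V \<and> c \<in> V \<and> E a b \<and> E b c \<and> E a c}"

definition C3_adj :: "'a set \<Rightarrow> 'a set \<Rightarrow> bool" where
  "C3_adj S T \<longleftrightarrow> S \<noteq> T \<and> S \<inter> T \<noteq> {}"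

end

theory Submission
  imports Defs "Jordan_Normal_Form.Schur_Decomposition"
begin

(*
  Since lambda = 1, every edge uv lies in exactly one triangle {u, v, third u v}, every vertex lies
  in k/2 triangles, and two distinct triangles share at most one vertex.  Hence C_3 is regular of
  degree 3(k/2 - 1), two triangles through a vertex v have the other k/2 - 2 triangles through v
  as common neighbours, and two disjoint triangles t, s have as many common neighbours as s has
  vertices adjacent to t.

  If n = 3k - 3, every vertex outside a triangle is adjacent to it, so this number is always 3
  and C_3 is strongly regular.  The identity k(k - 2) = (n - k - 1)mu then gives k = 2mu, a
  Cauchy-Schwarz count over the vertices adjacent to neither of two non-adjacent vertices gives
  mu <= 5, and integrality of the eigenvalue multiplicities excludes mu = 4.

  Otherwise some vertex x is adjacent to no vertex of some triangle t.  If C_3 is strongly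
  regular, counting the neighbours of x, and of a vertex adjacent to t, along the triangles
  through them forces k = 6 and mu in {1, 2}, i.e. srg(31,6,1,1) or srg(19,6,1,2), which again
  violate the integrality condition.  Being non-boring provides mu >= 1 and a non-edge.
*)

lemma quadratic_roots_subset_pair:
  fixes p q :: "'a::idom"
  obtains a b where "{x. x * x = p * x + q} \<subseteq> {a, b}"
proof (cases "\<exists>a. a * a = p * a + q")
  case True
  then obtain a where a: "a * a = p * a + q" by blast
  have "x \<in> {a, p - a}" if x: "x * x = p * x + q" for x
  proof -
    have "(x - a) * (x - (p - a)) = (x * x - p * x - q) - (a * a - p * a - q)"
      by (simp add: algebra_simps)
    also have "\<dots> = 0" using a x by simp
    finally show ?thesis by auto
  qed
  then show ?thesis using that by blast
qed (use that in blast)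

lemma sum_list_map_three_values:
  assumes "set xs \<subseteq> {p, q, w}"
  shows "\<exists>a b c. length xs = a + b + c \<and> (\<forall>h :: 'a \<Rightarrow> 'b::semiring_1.
           sum_list (map h xs) = of_nat a * h p + of_nat b * h q + of_nat c * h w)"
  using assms
proof (induction xs)
  case (Cons x xs)
  then obtain a b c where len: "length xs = a + b + c" and IH: "\<forall>h :: 'a \<Rightarrow> 'b.
      sum_list (map h xs) = of_nat a * h p + of_nat b * h q + of_nat c * h w" by auto
  from Cons.prems consider "x = p" | "x = q" | "x = w" by auto
  then show ?case
  proof cases
    case 1
    with len IH show ?thesis by (intro exI[of _ "Suc a"] exI[of _ b] exI[of _ c]) (simp add: algebra_simps)
  next
    case 2
    with len IH show ?thesis by (intro exI[of _ a] exI[of _ "Suc b"] exI[of _ c]) (simp add: algebra_simps)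
  next
    case 3
    with len IH show ?thesis by (intro exI[of _ a] exI[of _ b] exI[of _ "Suc c"]) (simp add: algebra_simps)
  qed
qed auto

lemma card_filter_eq_sum_of_bool:
  "finite A \<Longrightarrow> card {x\<in>A. P x} = (\<Sum>x\<in>A. of_bool (P x))"
  by (simp add: Int_def)

lemma sum_card_filter_swap:
  assumes "finite A" "finite B"
  shows "(\<Sum>x\<in>A. card {y\<in>B. R x y}) = (\<Sum>y\<in>B. card {x\<in>A. R x y})"
proof -
  have "(\<Sum>x\<in>A. card {y\<in>B. R x y}) = (\<Sum>x\<in>A. \<Sum>y\<in>B. of_bool (R x y))"
    using assms(2) by (simp only: card_filter_eq_sum_of_bool)
  also have "\<dots> = (\<Sum>y\<in>B. \<Sum>x\<in>A. of_bool (R x y))" by (rule sum.swap)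
  also have "\<dots> = (\<Sum>y\<in>B. card {x\<in>A. R x y})"
    using assms(1) by (simp only: card_filter_eq_sum_of_bool)
  finally show ?thesis .
qed

lemma sum_card_filter_square:
  assumes "finite A" "finite B"
  shows "(\<Sum>x\<in>A. (card {y\<in>B. R x y})\<^sup>2) =
    (\<Sum>y\<in>B. \<Sum>y'\<in>B. card {x\<in>A. R x y \<and> R x y'})"
proof -
  have "(card {y\<in>B. R x y})\<^sup>2 = (\<Sum>y\<in>B. \<Sum>y'\<in>B. of_bool (R x y \<and> R x y'))" for x
    using assms(2) by (simp only: card_filter_eq_sum_of_bool power2_eq_square sum_product of_bool_conj)
  then have "(\<Sum>x\<in>A. (card {y\<in>B. R x y})\<^sup>2) =
      (\<Sum>x\<in>A. \<Sum>y\<in>B. \<Sum>y'\<in>B. of_bool (R x y \<and> R x y'))"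
    by simp
  also have "\<dots> = (\<Sum>y\<in>B. \<Sum>y'\<in>B. \<Sum>x\<in>A. of_bool (R x y \<and> R x y'))"
    by (simp only: sum.swap[of _ A])
  also have "\<dots> = (\<Sum>y\<in>B. \<Sum>y'\<in>B. card {x\<in>A. R x y \<and> R x y'})"
    using assms(1) by (simp only: card_filter_eq_sum_of_bool)
  finally show ?thesis .
qed

lemma far_near_arith:
  fixes c k m :: nat
  assumes "c * k = 6 * m" "c \<le> 2" "4 * (m - 1) = (c - 1) * (k - 2)" "m \<ge> 1"
  shows "k = 6 \<and> (m = 1 \<or> m = 2)"
proof -
  have "c = 0 \<or> c = 1 \<or> c = 2" using assms(2) by auto
  then show ?thesis using assms by auto
qed

lemma variance_bound_arith:
  fixes m :: nat
  assumes "(m * (2 * m - 4))\<^sup>2 \<le> m * ((2 * m - 4) + (m - 1) * (m - 2)) * ((6 * m - 3) - 2 - (2 * (2 * m) - m))"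
  shows "m \<le> 5"
proof (rule ccontr)
  assume "\<not> m \<le> 5"
  define j where "j = m - 6"
  have m: "m = j + 6" using \<open>\<not> m \<le> 5\<close> by (simp add: j_def)
  have "2 * m - 4 = 2 * j + 8" "m - 1 = j + 5" "m - 2 = j + 4" "(6 * m - 3) - 2 - (2 * (2 * m) - m) = 3 * j + 13"
    using m by simp_all
  with assms have "((j + 6) * (2 * j + 8))\<^sup>2 \<le> (j + 6) * ((2 * j + 8) + (j + 5) * (j + 4)) * (3 * j + 13)"
    by (simp only: m)
  moreover have "((j + 6) * (2 * j + 8))\<^sup>2 =
      (j + 6) * ((2 * j + 8) + (j + 5) * (j + 4)) * (3 * j + 13) + (j + 6) * (j + 4) * (j * j + 6 * j + 5)"
    by (simp add: algebra_simps power2_eq_square)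
  moreover have "(j + 6) * (j + 4) * (j * j + 6 * j + 5) > 0" by simp
  ultimately show False by linarith
qed

section \<open>Traces of square matrices\<close>

definition mat_trace :: "'a::comm_ring_1 Matrix.mat \<Rightarrow> 'a" where
  "mat_trace A = (\<Sum>i\<in>{0..<dim_row A}. A $$ (i, i))"

lemma mat_trace_mult_comm:
  assumes "A \<in> carrier_mat n m" and "B \<in> carrier_mat m n"
  shows "mat_trace (A * B) = mat_trace (B * A)"
proof -
  have "mat_trace (A * B) = (\<Sum>i\<in>{0..<n}. \<Sum>j\<in>{0..<m}. A $$ (i, j) * B $$ (j, i))"
    using assms by (simp add: mat_trace_def scalar_prod_def)
  also have "\<dots> = (\<Sum>j\<in>{0..<m}. \<Sum>i\<in>{0..<n}. B $$ (j, i) * A $$ (i, j))"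
    by (subst sum.swap) (simp add: mult.commute)
  also have "\<dots> = mat_trace (B * A)"
    using assms by (simp add: mat_trace_def scalar_prod_def)
  finally show ?thesis .
qed

lemma mat_trace_similar:
  assumes "similar_mat_wit A B P Q"
  shows "mat_trace A = mat_trace B"
proof -
  from similar_mat_witD[OF refl assms] obtain n where
    carr: "A \<in> carrier_mat n n" "B \<in> carrier_mat n n" "P \<in> carrier_mat n n" "Q \<in> carrier_mat n n"
    and QP: "Q * P = 1\<^sub>m n" and A: "A = P * B * Q"
    by blast
  have "mat_trace A = mat_trace (P * (B * Q))" using A carr by simp
  also have "\<dots> = mat_trace (B * Q * P)" using carr by (intro mat_trace_mult_comm) auto
  also have "\<dots> = mat_trace B" using carr QP by (simp add: assoc_mult_mat[of B n n Q n P n])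
  finally show ?thesis .
qed

lemma mat_trace_eq_sum_list_diag:
  "A \<in> carrier_mat n n \<Longrightarrow> mat_trace A = sum_list (diag_mat A)"
  by (simp add: mat_trace_def diag_mat_def sum_list_sum_nth atLeast0LessThan)

lemma diag_mat_square_upper_triangular:
  fixes A :: "'a::comm_ring_1 Matrix.mat"
  assumes A: "A \<in> carrier_mat n n" and ut: "upper_triangular A"
  shows "diag_mat (A * A) = map (\<lambda>x. x\<^sup>2) (diag_mat A)"
proof -
  have "(A * A) $$ (i, i) = (A $$ (i, i))\<^sup>2" if i: "i < n" for i
  proof -
    have "(A * A) $$ (i, i) = (\<Sum>j\<in>{0..<n}. A $$ (i, j) * A $$ (j, i))"
      using A i by (simp add: scalar_prod_def)
    also have "\<dots> = (\<Sum>j\<in>{0..<n}. if j = i then A $$ (i, i) * A $$ (i, i) else 0)"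
    proof (rule sum.cong)
      fix j assume "j \<in> {0..<n}"
      then show "A $$ (i, j) * A $$ (j, i) = (if j = i then A $$ (i, i) * A $$ (i, i) else 0)"
        using ut A i by (cases "j < i") (auto simp: upper_triangular_def)
    qed simp
    finally show ?thesis using i by (simp add: power2_eq_square)
  qed
  then show ?thesis using A by (simp add: diag_mat_def)
qed

lemma complex_mat_eigenvalue_list:
  fixes A :: "complex Matrix.mat"
  assumes A: "A \<in> carrier_mat n n"
  obtains es where "length es = n" and "\<forall>e\<in>set es. eigenvalue A e"
    and "mat_trace A = sum_list es" and "mat_trace (A * A) = sum_list (map (\<lambda>e. e\<^sup>2) es)"
proof -
  obtain es where cp: "char_poly A = (\<Prod>a\<leftarrow>es. [:- a, 1:])" and len: "length es = n"
    using char_poly_factorized[OF A] by blast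
  obtain B P Q where "schur_decomposition A es = (B, P, Q)"
    by (cases "schur_decomposition A es") auto
  with schur_decomposition[OF A cp] have sim: "similar_mat_wit A B P Q"
    and ut: "upper_triangular B" and diag: "diag_mat B = es"
    by auto
  have B: "B \<in> carrier_mat n n" using similar_mat_witD2(5)[OF A sim] .
  have "eigenvalue A e" if "e \<in> set es" for e
    using that by (simp add: eigenvalue_root_char_poly[OF A] cp poly_prod_list o_def)
  moreover have "mat_trace A = sum_list es"
    using mat_trace_similar[OF sim] mat_trace_eq_sum_list_diag[OF B] diag by simp
  moreover have "mat_trace (A * A) = sum_list (map (\<lambda>e. e\<^sup>2) es)"
  proof -
    have "similar_mat_wit (A ^\<^sub>m 2) (B ^\<^sub>m 2) P Q" by (rule similar_mat_wit_pow[OF sim])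
    then have "mat_trace (A * A) = mat_trace (B * B)"
      using A B by (simp add: mat_trace_similar numeral_2_eq_2)
    also have "\<dots> = sum_list (map (\<lambda>e. e\<^sup>2) es)"
      using B ut diag by (simp add: mat_trace_eq_sum_list_diag[of _ n] diag_mat_square_upper_triangular)
    finally show ?thesis .
  qed
  ultimately show ?thesis using that len by blast
qed

locale srg_graph =
  fixes E :: "'a::finite \<Rightarrow> 'a \<Rightarrow> bool" and n k l \<mu> :: nat
  assumes srg: "srg UNIV E n k l \<mu>"
begin

abbreviation N :: "'a \<Rightarrow> 'a set" where "N v \<equiv> {w. E v w}"

lemma nbhd_UNIV [simp]: "nbhd UNIV E v = N v"
  by (simp add: nbhd_def)

lemma adj_sym: "E u v \<longleftrightarrow> E v u"
  using srg by (simp add: srg_def simple_graph_def)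

lemma adj_irrefl [simp]: "\<not> E v v"
  using srg by (simp add: srg_def simple_graph_def)

lemma card_N: "card (N v) = k"
  using srg by (simp add: srg_def)

lemma card_UNIV_eq: "card (UNIV :: 'a set) = n"
  using srg by (simp add: srg_def)

lemma card_common_neighbours:
  "card (N u \<inter> N v) = (if u = v then k else if E u v then l else \<mu>)"
  using srg by (simp add: srg_def card_N)

lemma card_non_neighbours: "card {w. w \<noteq> v \<and> \<not> E v w} + k + 1 = n"
proof -
  have "UNIV = {w. w \<noteq> v \<and> \<not> E v w} \<union> insert v (N v)" by auto
  then have "n = card ({w. w \<noteq> v \<and> \<not> E v w} \<union> insert v (N v))"
    by (simp add: card_UNIV_eq)
  also have "\<dots> = card {w. w \<noteq> v \<and> \<not> E v w} + (k + 1)"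
    by (subst card_Un_disjoint) (auto simp: card_N)
  finally show ?thesis by simp
qed

lemma srg_parameter_identity: "int k * (int k - int l - 1) = (int n - int k - 1) * int \<mu>"
proof -
  fix v :: 'a
  define M where "M = {w. w \<noteq> v \<and> \<not> E v w}"
  have "card {w\<in>M. E y w} + l + 1 = k" if "E v y" for y
  proof -
    let ?X = "(N y \<inter> N v) \<union> {w\<in>M. E y w}"
    have "N y = insert v ?X"
      using that by (auto simp: M_def adj_sym)
    then have "k = card (insert v ?X)" by (metis card_N)
    also have "\<dots> = Suc (card ?X)" by (rule card_insert_disjoint) (auto simp: M_def)
    also have "\<dots> = Suc (card (N y \<inter> N v) + card {w\<in>M. E y w})"
      by (subst card_Un_disjoint) (auto simp: M_def)
    finally have "k = Suc (card (N y \<inter> N v) + card {w\<in>M. E y w})" .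
    moreover have "card (N y \<inter> N v) = l" using that card_common_neighbours[of y v] by (auto simp: adj_sym)
    ultimately show ?thesis by simp
  qed
  then have "(\<Sum>y\<in>N v. int (card {w\<in>M. E y w})) = (\<Sum>y\<in>N v. int k - int l - 1)"
    by (intro sum.cong) force+
  then have "int (\<Sum>y\<in>N v. card {w\<in>M. E y w}) = int k * (int k - int l - 1)"
    by (simp add: card_N)
  moreover have "(\<Sum>y\<in>N v. card {w\<in>M. E y w}) = (\<Sum>w\<in>M. card {y\<in>N v. E y w})"
    by (rule sum_card_filter_swap) auto
  moreover have "card {y\<in>N v. E y w} = \<mu>" if "w \<in> M" for w
    using that card_common_neighbours[of v w] by (auto simp: M_def adj_sym Int_def)
  moreover have "int (card M) = int n - int k - 1"
    using card_non_neighbours[of v] by (simp add: M_def)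
  ultimately show ?thesis by simp
qed

definition non_neighbours_of_both :: "'a \<Rightarrow> 'a \<Rightarrow> 'a set" where
  "non_neighbours_of_both x y = {z. z \<noteq> x \<and> z \<noteq> y \<and> \<not> E x z \<and> \<not> E y z}"

lemma card_non_neighbours_of_both:
  assumes "x \<noteq> y" "\<not> E x y"
  shows "card (non_neighbours_of_both x y) = n - 2 - (2 * k - \<mu>)"
proof -
  have "card (N x \<union> N y) = 2 * k - \<mu>"
    using card_Un_Int[of "N x" "N y"] card_common_neighbours[of x y] assms by (simp add: card_N)
  moreover have "card ({x, y} \<union> (N x \<union> N y)) = 2 + card (N x \<union> N y)"
    using assms by (subst card_Un_disjoint) (auto simp: adj_sym)
  moreover have "non_neighbours_of_both x y = UNIV - ({x, y} \<union> (N x \<union> N y))"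
    by (auto simp: non_neighbours_of_both_def)
  ultimately show ?thesis by (simp add: card_Diff_subset card_UNIV_eq)
qed

lemma adj_matrix_square: "adj_matrix E ** adj_matrix E = (\<chi> i j. real (card (N i \<inter> N j)))"
proof -
  have "(\<Sum>m\<in>UNIV. (if E i m then 1 else 0) * (if E m j then 1 else 0)) = real (card (N i \<inter> N j))"
    for i j
  proof -
    have "(\<Sum>m\<in>UNIV. (if E i m then 1 else 0) * (if E m j then 1 else 0))
        = (\<Sum>m\<in>UNIV. of_bool (m \<in> N i \<inter> N j) :: real)"
      by (intro sum.cong) (auto simp: adj_sym[of _ j])
    then show ?thesis by (simp add: Int_def)
  qed
  then show ?thesis by (simp add: matrix_matrix_mult_def adj_matrix_def vec_eq_iff)
qed

lemma boring_if_mu_eq_0_or_complete: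
  assumes "\<mu> = 0 \<or> (\<forall>u v. u \<noteq> v \<longrightarrow> E u v)"
  shows "boring E"
proof -
  have "card (N i \<inter> N j) = (if i = j then k else if E i j then l else 0)" for i j
    using assms card_common_neighbours[of i j] by auto
  then have "adj_matrix E ** adj_matrix E = real k *\<^sub>R Finite_Cartesian_Product.mat 1 + real l *\<^sub>R adj_matrix E"
    unfolding adj_matrix_square
    by (simp add: adj_matrix_def Finite_Cartesian_Product.mat_def Finite_Cartesian_Product.vec_eq_iff)
  then have square: "adj_matrix E *v (adj_matrix E *v x) = real k *\<^sub>R x + real l *\<^sub>R (adj_matrix E *v x)"
    for x
    by (simp add: matrix_vector_mul_assoc matrix_vector_mult_add_rdistrib flip: scaleR_matrix_vector_assoc)
  have "c * c = real l * c + real k" if c: "c \<in> adj_eigenvalues E" for c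
  proof -
    obtain x where x: "x \<noteq> 0" "adj_matrix E *v x = c *\<^sub>R x"
      using c by (auto simp: adj_eigenvalues_def)
    have "(c * c) *\<^sub>R x = (real l * c + real k) *\<^sub>R x"
      using square[of x] x(2) by (simp add: algebra_simps)
    then show ?thesis using x(1) by simp
  qed
  moreover obtain a b where "{c. c * c = real l * c + real k} \<subseteq> {a, b}"
    by (rule quadratic_roots_subset_pair)
  ultimately have "adj_eigenvalues E \<subseteq> {a, b}" by blast
  then have "card (adj_eigenvalues E) \<le> card {a, b}" by (rule card_mono[rotated]) simp
  also have "\<dots> \<le> 2" by (simp add: card_insert_if)
  finally show ?thesis by (simp add: boring_def)
qed

end

section \<open>The integrality condition\<close>

(* Jordan_Normal_Form and HOL-Analysis both use $ for vector indexing. *)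
unbundle no vec_syntax

context srg_graph
begin

(* Jordan_Normal_Form matrices are indexed by natural numbers, so we enumerate the vertices. *)
definition vertex :: "nat \<Rightarrow> 'a" where
  "vertex = (SOME f. bij_betw f {0..<n} UNIV)"

lemma bij_vertex: "bij_betw vertex {0..<n} UNIV"
proof -
  have "\<exists>f. bij_betw f {0..<n} (UNIV :: 'a set)"
    using ex_bij_betw_nat_finite[of "UNIV :: 'a set"] card_UNIV_eq by auto
  then show ?thesis unfolding vertex_def by (rule someI_ex)
qed

lemma sum_vertex: "(\<Sum>i\<in>{0..<n}. f (vertex i)) = (\<Sum>v\<in>UNIV. f v)"
  using sum.reindex_bij_betw[OF bij_vertex] .

lemma vertex_eq_iff: "i < n \<Longrightarrow> j < n \<Longrightarrow> vertex i = vertex j \<longleftrightarrow> i = j"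
  using bij_vertex by (auto simp: bij_betw_def inj_on_def)

definition adjacency :: "complex Matrix.mat" where
  "adjacency = Matrix.mat n n (\<lambda>(i, j). of_bool (E (vertex i) (vertex j)))"

lemma adjacency_carrier: "adjacency \<in> carrier_mat n n"
  by (simp add: adjacency_def)

lemma adjacency_index: "i < n \<Longrightarrow> j < n \<Longrightarrow> adjacency $$ (i, j) = of_bool (E (vertex i) (vertex j))"
  by (simp add: adjacency_def)

lemma sum_vertex_of_bool: "(\<Sum>i\<in>{0..<n}. of_bool (P (vertex i))) = of_nat (card {v. P v})"
  unfolding sum_vertex[of "\<lambda>v. of_bool (P v)"] by simp

lemma adjacency_column_sum:
  assumes "j < n"
  shows "(\<Sum>i\<in>{0..<n}. adjacency $$ (i, j)) = of_nat k"
proof -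
  have "(\<Sum>i\<in>{0..<n}. adjacency $$ (i, j)) = (\<Sum>i\<in>{0..<n}. of_bool (E (vertex j) (vertex i)))"
    using assms by (intro sum.cong) (auto simp: adjacency_index adj_sym)
  then show ?thesis by (simp only: sum_vertex_of_bool[of "E (vertex j)"] card_N)
qed

lemma adjacency_square:
  "adjacency * adjacency = Matrix.mat n n (\<lambda>(i, j).
     of_nat \<mu> + (of_nat l - of_nat \<mu>) * adjacency $$ (i, j) + (if i = j then of_nat k - of_nat \<mu> else 0))"
proof -
  have "(adjacency * adjacency) $$ (i, j) =
    of_nat \<mu> + (of_nat l - of_nat \<mu>) * adjacency $$ (i, j) + (if i = j then of_nat k - of_nat \<mu> else 0)"
    if ij: "i < n" "j < n" for i j
  proof -
    have "(adjacency * adjacency) $$ (i, j) = (\<Sum>m\<in>{0..<n}. adjacency $$ (i, m) * adjacency $$ (m, j))"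
      using ij adjacency_carrier by (simp add: scalar_prod_def)
    also have "\<dots> = (\<Sum>m\<in>{0..<n}. of_bool (E (vertex i) (vertex m) \<and> E (vertex j) (vertex m)))"
      using ij by (intro sum.cong) (auto simp: adjacency_index adj_sym[of _ "vertex j"])
    also have "\<dots> = of_nat (card (N (vertex i) \<inter> N (vertex j)))"
      by (simp only: sum_vertex_of_bool[of "\<lambda>v. E (vertex i) v \<and> E (vertex j) v"] Collect_conj_eq)
    finally show ?thesis
      using ij by (simp add: card_common_neighbours adjacency_index vertex_eq_iff)
  qed
  then show ?thesis
    using adjacency_carrier by (intro eq_matI) (simp_all del: index_mult_mat(1))
qed

lemma adjacency_mult_vec_index:
  "v \<in> carrier_vec n \<Longrightarrow> i < n \<Longrightarrow>
    (adjacency *\<^sub>v v) $ i = (\<Sum>j\<in>{0..<n}. adjacency $$ (i, j) * v $ j)"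
  using adjacency_carrier by (simp add: scalar_prod_def)

lemma sum_adjacency_mult_vec:
  assumes "v \<in> carrier_vec n"
  shows "(\<Sum>i\<in>{0..<n}. (adjacency *\<^sub>v v) $ i) = of_nat k * (\<Sum>i\<in>{0..<n}. v $ i)"
proof -
  have "(\<Sum>i\<in>{0..<n}. (adjacency *\<^sub>v v) $ i) =
      (\<Sum>i\<in>{0..<n}. \<Sum>j\<in>{0..<n}. adjacency $$ (i, j) * v $ j)"
    using assms by (simp add: adjacency_mult_vec_index)
  also have "\<dots> = (\<Sum>j\<in>{0..<n}. (\<Sum>i\<in>{0..<n}. adjacency $$ (i, j)) * v $ j)"
    by (subst sum.swap) (simp add: sum_distrib_right)
  also have "\<dots> = of_nat k * (\<Sum>i\<in>{0..<n}. v $ i)"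
    by (simp add: adjacency_column_sum sum_distrib_left)
  finally show ?thesis .
qed

lemma adjacency_square_mult_vec_index:
  assumes v: "v \<in> carrier_vec n" and i: "i < n"
  shows "((adjacency * adjacency) *\<^sub>v v) $ i = of_nat \<mu> * (\<Sum>j\<in>{0..<n}. v $ j)
    + (of_nat l - of_nat \<mu>) * (adjacency *\<^sub>v v) $ i + (of_nat k - of_nat \<mu>) * v $ i"
proof -
  have "((adjacency * adjacency) *\<^sub>v v) $ i = (\<Sum>j\<in>{0..<n}. (of_nat \<mu> + (of_nat l - of_nat \<mu>) * adjacency $$ (i, j)
      + (if i = j then of_nat k - of_nat \<mu> else 0)) * v $ j)"
    using v i by (simp add: adjacency_square scalar_prod_def)
  also have "\<dots> = (\<Sum>j\<in>{0..<n}. of_nat \<mu> * v $ j + (of_nat l - of_nat \<mu>) * (adjacency $$ (i, j) * v $ j)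
      + (if j = i then (of_nat k - of_nat \<mu>) * v $ j else 0))"
    by (intro sum.cong) (simp_all add: algebra_simps)
  also have "\<dots> = of_nat \<mu> * (\<Sum>j\<in>{0..<n}. v $ j)
      + (of_nat l - of_nat \<mu>) * (adjacency *\<^sub>v v) $ i + (of_nat k - of_nat \<mu>) * v $ i"
    using v i by (simp add: adjacency_mult_vec_index sum.distrib sum_distrib_left)
  finally show ?thesis .
qed

lemma adjacency_eigenvalue:
  assumes "eigenvalue adjacency e"
  shows "e = of_nat k \<or> e\<^sup>2 = (of_nat l - of_nat \<mu>) * e + (of_nat k - of_nat \<mu>)"
proof -
  obtain v where v: "eigenvector adjacency v e"
    using assms by (auto simp: eigenvalue_def)
  then have carr: "v \<in> carrier_vec n" and nz: "v \<noteq> 0\<^sub>v n" and Av: "adjacency *\<^sub>v v = e \<cdot>\<^sub>v v"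
    using adjacency_carrier by (auto simp: eigenvector_def)
  have "e * (\<Sum>i\<in>{0..<n}. v $ i) = of_nat k * (\<Sum>i\<in>{0..<n}. v $ i)"
    using sum_adjacency_mult_vec[OF carr] Av carr by (simp add: sum_distrib_left)
  moreover have "e\<^sup>2 = (of_nat l - of_nat \<mu>) * e + (of_nat k - of_nat \<mu>)" if "(\<Sum>i\<in>{0..<n}. v $ i) = 0"
  proof -
    obtain i where i: "i < n" "v $ i \<noteq> 0"
      using nz carr by (metis carrier_vecD eq_vecI index_zero_vec)
    have "(adjacency * adjacency) *\<^sub>v v = e\<^sup>2 \<cdot>\<^sub>v v"
      using eigenvector_pow[OF adjacency_carrier v, of 2] adjacency_carrier by (simp add: numeral_2_eq_2)
    then have "e\<^sup>2 * v $ i = ((adjacency * adjacency) *\<^sub>v v) $ i"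
      using i carr by (simp del: assoc_mult_mat_vec)
    also have "\<dots> = ((of_nat l - of_nat \<mu>) * e + (of_nat k - of_nat \<mu>)) * v $ i"
      using that Av i carr by (simp add: adjacency_square_mult_vec_index algebra_simps)
    finally show ?thesis using i(2) by simp
  qed
  ultimately show ?thesis by auto
qed

lemma adjacency_trace: "mat_trace adjacency = 0"
  by (simp add: mat_trace_def adjacency_def)

lemma adjacency_square_trace: "mat_trace (adjacency * adjacency) = of_nat (n * k)"
  by (simp add: mat_trace_def adjacency_square adjacency_index)

lemma eigenvalue_multiplicities:
  fixes r s :: complex
  assumes rs: "r + s = of_nat l - of_nat \<mu>" "r * s = of_nat \<mu> - of_nat k"
  obtains a b c :: nat where "a + b + c = n"
    and "of_nat a * of_nat k + of_nat b * r + of_nat c * s = 0"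
    and "of_nat a * (of_nat k)\<^sup>2 + of_nat b * r\<^sup>2 + of_nat c * s\<^sup>2 = of_nat (n * k)"
proof -
  obtain es where es: "length es = n" "\<forall>e\<in>set es. eigenvalue adjacency e"
    "mat_trace adjacency = sum_list es" "mat_trace (adjacency * adjacency) = sum_list (map (\<lambda>e. e\<^sup>2) es)"
    by (rule complex_mat_eigenvalue_list[OF adjacency_carrier])
  have "set es \<subseteq> {of_nat k, r, s}"
  proof
    fix e assume "e \<in> set es"
    then have "e = of_nat k \<or> e\<^sup>2 = (of_nat l - of_nat \<mu>) * e + (of_nat k - of_nat \<mu>)"
      using adjacency_eigenvalue es(2) by blast
    moreover have "(e - r) * (e - s) = e\<^sup>2 - (r + s) * e + r * s"
      by (simp add: algebra_simps power2_eq_square)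
    then have "(e - r) * (e - s) = e\<^sup>2 - ((of_nat l - of_nat \<mu>) * e + (of_nat k - of_nat \<mu>))"
      unfolding rs by (simp add: algebra_simps)
    ultimately have "e = of_nat k \<or> (e - r) * (e - s) = 0"
      by auto
    then show "e \<in> {of_nat k, r, s}" by auto
  qed
  from sum_list_map_three_values[OF this] obtain a b c where len: "length es = a + b + c"
    and sums: "\<forall>h :: complex \<Rightarrow> complex.
      sum_list (map h es) = of_nat a * h (of_nat k) + of_nat b * h r + of_nat c * h s"
    by blast
  show thesis
  proof (rule that)
    show "a + b + c = n" using len es(1) by simp
    show "of_nat a * of_nat k + of_nat b * r + of_nat c * s = 0"
      using sums[rule_format, of "\<lambda>e. e"] es(3) adjacency_trace by simp
    show "of_nat a * (of_nat k)\<^sup>2 + of_nat b * r\<^sup>2 + of_nat c * s\<^sup>2 = of_nat (n * k)"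
      using sums[rule_format, of "\<lambda>e. e\<^sup>2"] es(4) adjacency_square_trace by simp
  qed
qed

lemma eigenvalue_multiplicities_simple_degree:
  fixes r s :: complex
  assumes "\<mu> \<ge> 1" and rs: "r + s = of_nat l - of_nat \<mu>" "r * s = of_nat \<mu> - of_nat k"
  obtains f g :: nat where "f + g + 1 = n" and "of_nat f * r + of_nat g * s = - of_nat k"
proof -
  obtain a f g where mult: "a + f + g = n"
    "of_nat a * of_nat k + of_nat f * r + of_nat g * s = 0"
    "of_nat a * (of_nat k)\<^sup>2 + of_nat f * r\<^sup>2 + of_nat g * s\<^sup>2 = (of_nat (n * k) :: complex)"
    by (rule eigenvalue_multiplicities[OF rs])
  \<comment> \<open>eliminate r and s from the three trace equations\<close>
  have "of_nat a * ((of_nat k - r) * (of_nat k - s)) =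
      (of_nat a * (of_nat k)\<^sup>2 + of_nat f * r\<^sup>2 + of_nat g * s\<^sup>2)
      - (r + s) * (of_nat a * of_nat k + of_nat f * r + of_nat g * s) + r * s * of_nat (a + f + g)"
    by (simp add: algebra_simps power2_eq_square)
  also have "\<dots> = of_nat (n * k) - (r + s) * 0 + (of_nat \<mu> - of_nat k) * of_nat n"
    by (simp only: mult rs(2))
  also have "\<dots> = of_nat (n * \<mu>)"
    by (simp add: algebra_simps)
  finally have "of_nat a * ((of_nat k - r) * (of_nat k - s)) = (of_nat (n * \<mu>) :: complex)" .
  moreover have "(of_nat k - r) * (of_nat k - s) = (of_nat (n * \<mu>) :: complex)"
  proof -
    have "of_int (int k * (int k - int l - 1)) = (of_int ((int n - int k - 1) * int \<mu>) :: complex)"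
      by (simp only: srg_parameter_identity)
    moreover have "(of_nat k - r) * (of_nat k - s) = of_nat k * of_nat k - (r + s) * of_nat k + r * s"
      by (simp add: algebra_simps)
    ultimately show ?thesis unfolding rs by (simp add: algebra_simps)
  qed
  moreover have "n * \<mu> \<noteq> 0"
    using assms card_UNIV_eq by auto
  ultimately have "a = 1" by simp
  with mult show thesis
    using that by (simp add: add.assoc add_eq_0_iff)
qed

lemma integrality_condition:
  assumes "\<mu> \<ge> 1"
  obtains f g :: nat where "f + g + 1 = n"
    and "(int f - int g)\<^sup>2 * ((int l - int \<mu>)\<^sup>2 + 4 * (int k - int \<mu>)) =
         (2 * int k + (int n - 1) * (int l - int \<mu>))\<^sup>2"
proof -
  define \<Delta> :: complex where "\<Delta> = (of_nat l - of_nat \<mu>)\<^sup>2 + 4 * (of_nat k - of_nat \<mu>)"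
  define r where "r = (of_nat l - of_nat \<mu> + csqrt \<Delta>) / 2"
  define s where "s = (of_nat l - of_nat \<mu> - csqrt \<Delta>) / 2"
  have "r * s = ((of_nat l - of_nat \<mu>)\<^sup>2 - (csqrt \<Delta>)\<^sup>2) / 4"
    by (simp add: r_def s_def field_simps power2_eq_square)
  also have "\<dots> = of_nat \<mu> - of_nat k"
    by (simp add: \<Delta>_def)
  finally have rs: "r + s = of_nat l - of_nat \<mu>" "r * s = of_nat \<mu> - of_nat k"
    by (simp_all add: r_def s_def field_simps)
  obtain f g where fg: "f + g + 1 = n" and lin: "of_nat f * r + of_nat g * s = - of_nat k"
    by (rule eigenvalue_multiplicities_simple_degree[OF assms rs])
  have "of_int (int f - int g) * csqrt \<Delta> = 2 * (of_nat f * r + of_nat g * s) - of_nat (f + g) * (r + s)"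
    by (simp add: r_def s_def field_simps)
  also have "\<dots> = 2 * (- of_nat k) - (of_nat n - 1) * (of_nat l - of_nat \<mu>)"
    unfolding lin rs(1) by (simp flip: fg)
  also have "\<dots> = - (2 * of_nat k + (of_nat n - 1) * (of_nat l - of_nat \<mu>))"
    by (simp add: algebra_simps)
  finally have "(of_int (int f - int g) * csqrt \<Delta>)\<^sup>2 =
      (2 * of_nat k + (of_nat n - 1) * (of_nat l - of_nat \<mu>))\<^sup>2"
    by (simp only: power2_minus)
  then have "of_int ((int f - int g)\<^sup>2 * ((int l - int \<mu>)\<^sup>2 + 4 * (int k - int \<mu>))) =
      (of_int ((2 * int k + (int n - 1) * (int l - int \<mu>))\<^sup>2) :: complex)"
    by (simp add: \<Delta>_def power_mult_distrib)
  then show thesis using that fg of_int_eq_iff by blast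
qed

lemma integrality_dvd:
  assumes "\<mu> \<ge> 1"
  shows "(int l - int \<mu>)\<^sup>2 + 4 * (int k - int \<mu>) dvd (2 * int k + (int n - 1) * (int l - int \<mu>))\<^sup>2"
  using integrality_condition[OF assms] by (metis dvd_triv_right)

end

lemma no_srg_21_8_1_4: "\<not> srg (UNIV :: 'a::finite set) E 21 8 1 4"
proof
  assume "srg (UNIV :: 'a set) E 21 8 1 4"
  then interpret srg_graph E 21 8 1 4 by unfold_locales
  from integrality_dvd show False by simp
qed

lemma no_srg_31_6_1_1: "\<not> srg (UNIV :: 'a::finite set) E 31 6 1 1"
proof
  assume "srg (UNIV :: 'a set) E 31 6 1 1"
  then interpret srg_graph E 31 6 1 1 by unfold_locales
  from integrality_dvd show False by simp
qed

lemma no_srg_19_6_1_2: "\<not> srg (UNIV :: 'a::finite set) E 19 6 1 2"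
proof
  assume "srg (UNIV :: 'a set) E 19 6 1 2"
  then interpret srg_graph E 19 6 1 2 by unfold_locales
  from integrality_dvd show False by simp
qed

section \<open>Triangles in strongly regular graphs with lambda = 1\<close>

locale srg_one = srg_graph E n k 1 \<mu> for E :: "'a::finite \<Rightarrow> 'a \<Rightarrow> bool" and n k \<mu> :: nat
begin

lemma ex1_common_neighbour:
  assumes "E u v"
  shows "\<exists>!w. E u w \<and> E v w"
proof -
  have "card (N u \<inter> N v) = 1" using assms card_common_neighbours[of u v] by auto
  then obtain w where "N u \<inter> N v = {w}" by (rule card_1_singletonE)
  then show ?thesis by (intro ex1I[of _ w]) blast+
qed

definition third :: "'a \<Rightarrow> 'a \<Rightarrow> 'a" where
  "third u v = (THE w. E u w \<and> E v w)"

lemma third_adj: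
  assumes "E u v"
  shows "E u (third u v)" and "E v (third u v)"
  using theI'[OF ex1_common_neighbour[OF assms]] by (simp_all add: third_def)

lemma third_unique:
  assumes "E u v" "E u w" "E v w"
  shows "third u v = w"
  unfolding third_def using assms by (intro the1_equality ex1_common_neighbour) auto

lemma third_involution: "E u v \<Longrightarrow> third u (third u v) = v"
  using third_adj third_unique adj_sym by metis

lemma third_neq:
  assumes "E u v"
  shows "third u v \<noteq> u" and "third u v \<noteq> v"
  using third_adj[OF assms] by auto

abbreviation T :: "'a set set" where "T \<equiv> triangles UNIV E"

lemma mem_triangles: "s \<in> T \<longleftrightarrow> (\<exists>a b c. s = {a, b, c} \<and> E a b \<and> E b c \<and> E a c)"
  by (auto simp: triangles_def)

lemma triangle_of_edge: "E a b \<Longrightarrow> {a, b, third a b} \<in> T"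
  unfolding mem_triangles using third_adj by blast

lemma triangle_adj:
  assumes "s \<in> T" "a \<in> s" "b \<in> s" "a \<noteq> b"
  shows "E a b"
proof -
  obtain x y z where "s = {x, y, z}" "E x y" "E y z" "E x z"
    using assms(1) by (auto simp: mem_triangles)
  moreover from this have "E y x" "E z y" "E z x" by (simp_all add: adj_sym)
  ultimately show ?thesis using assms(2-4) by auto
qed

lemma card_triangle: "s \<in> T \<Longrightarrow> card s = 3"
  unfolding mem_triangles by (auto simp: card_insert_if)

lemma triangle_eq:
  assumes s: "s \<in> T" and ab: "a \<in> s" "b \<in> s" "a \<noteq> b"
  shows "s = {a, b, third a b}"
proof (rule card_seteq)
  show "s \<subseteq> {a, b, third a b}"
  proof
    fix c assume c: "c \<in> s"
    show "c \<in> {a, b, third a b}"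
    proof (cases "c = a \<or> c = b")
      case False
      then have "E a b" "E a c" "E b c" using triangle_adj[OF s] c ab by blast+
      then show ?thesis by (simp add: third_unique)
    qed auto
  qed
  show "card {a, b, third a b} \<le> card s"
    using card_triangle[OF s] by (simp add: card_insert_if)
qed simp

lemma triangle_inter:
  assumes "r \<in> T" "s \<in> T" "r \<noteq> s" "b \<in> r" "b \<in> s"
  shows "r \<inter> s = {b}"
proof -
  have "c = b" if "c \<in> r" "c \<in> s" for c
  proof (rule ccontr)
    assume "c \<noteq> b"
    then have "r = s" using triangle_eq[of r b c] triangle_eq[of s b c] assms that by simp
    with assms show False by simp
  qed
  with assms show ?thesis by blast
qed

definition triangles_at :: "'a \<Rightarrow> 'a set set" where
  "triangles_at v = {r \<in> T. v \<in> r}"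

lemma card_nbhd_filter:
  "card {y \<in> N v. P y} = (\<Sum>r\<in>triangles_at v. card {b \<in> r - {v}. P b})"
proof -
  have "{y \<in> N v. P y} = (\<Union>r\<in>triangles_at v. {b \<in> r - {v}. P b})"
  proof (intro equalityI subsetI)
    fix y assume "y \<in> {y \<in> N v. P y}"
    then have "E v y" "P y" by auto
    then have "{v, y, third v y} \<in> triangles_at v" "y \<in> {b \<in> {v, y, third v y} - {v}. P b}"
      using triangle_of_edge by (auto simp: triangles_at_def)
    then show "y \<in> (\<Union>r\<in>triangles_at v. {b \<in> r - {v}. P b})" by blast
  qed (auto simp: triangles_at_def triangle_adj)
  also have "card \<dots> = (\<Sum>r\<in>triangles_at v. card {b \<in> r - {v}. P b})"
  proof (rule card_UN_disjoint)
    show "\<forall>r\<in>triangles_at v. \<forall>r'\<in>triangles_at v. r \<noteq> r' \<longrightarrow>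
        {b \<in> r - {v}. P b} \<inter> {b \<in> r' - {v}. P b} = {}"
      using triangle_inter[of _ _ v] by (auto simp: triangles_at_def)
  qed simp_all
  finally show ?thesis .
qed

lemma card_triangles_at: "2 * card (triangles_at v) = k"
proof -
  have "k = (\<Sum>r\<in>triangles_at v. card {b \<in> r - {v}. True})"
    using card_nbhd_filter[of v "\<lambda>_. True"] by (simp add: card_N)
  also have "\<dots> = (\<Sum>r\<in>triangles_at v. 2)"
  proof (rule sum.cong)
    fix r assume "r \<in> triangles_at v"
    then have "card (r - {v}) = 2" by (simp add: triangles_at_def card_triangle)
    then show "card {b \<in> r - {v}. True} = 2" by (simp add: set_diff_eq)
  qed simp
  finally show ?thesis by simp
qed

lemma card_triangles_at_eq: "card (triangles_at v) = k div 2"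
  using card_triangles_at[of v] by linarith

definition adj_to :: "'a set \<Rightarrow> 'a \<Rightarrow> bool" where
  "adj_to t x \<longleftrightarrow> (\<exists>a\<in>t. E a x)"

lemma adj_to_unique:
  assumes t: "t \<in> T" "x \<notin> t" and ab: "a \<in> t" "b \<in> t" "E a x" "E b x"
  shows "a = b"
proof (rule ccontr)
  assume "a \<noteq> b"
  then have "t = {a, b, third a b}" using triangle_eq t ab by blast
  moreover have "third a b = x"
    using triangle_adj[OF t(1) ab(1,2) \<open>a \<noteq> b\<close>] ab(3,4) by (rule third_unique)
  ultimately show False using t(2) by simp
qed

section \<open>The triangle graph\<close>

lemma C3_nbhd: "nbhd T C3_adj t = {r \<in> T. r \<noteq> t \<and> r \<inter> t \<noteq> {}}"
  by (auto simp: nbhd_def C3_adj_def)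

lemma C3_degree:
  assumes t: "t \<in> T"
  shows "card (nbhd T C3_adj t) = 3 * (k div 2 - 1)"
proof -
  have "nbhd T C3_adj t = (\<Union>a\<in>t. triangles_at a - {t})"
    by (auto simp: C3_nbhd triangles_at_def)
  also have "card \<dots> = (\<Sum>a\<in>t. card (triangles_at a - {t}))"
  proof (rule card_UN_disjoint)
    show "\<forall>a\<in>t. \<forall>b\<in>t. a \<noteq> b \<longrightarrow> (triangles_at a - {t}) \<inter> (triangles_at b - {t}) = {}"
      using triangle_inter[OF _ t] by (auto simp: triangles_at_def)
  qed simp_all
  also have "\<dots> = (\<Sum>a\<in>t. k div 2 - 1)"
  proof (rule sum.cong)
    fix a assume "a \<in> t"
    then have "t \<in> triangles_at a" using t by (simp add: triangles_at_def)
    then show "card (triangles_at a - {t}) = k div 2 - 1"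
      by (simp add: card_triangles_at_eq)
  qed simp
  finally show ?thesis using card_triangle[OF t] by simp
qed

lemma no_edge_between_touching_triangles:
  assumes t: "t \<in> T" and s: "s \<in> T" and ts: "t \<inter> s = {v}"
    and a: "a \<in> t" "a \<noteq> v" and b: "b \<in> s" "b \<noteq> v"
  shows "\<not> E a b"
proof
  assume "E a b"
  have "v \<in> t" "v \<in> s" using ts by auto
  then have "E v a" "E v b" using triangle_adj t s a b by metis+
  then have "third v a = b" using \<open>E a b\<close> by (simp add: third_unique)
  then have "b \<in> t" using triangle_eq[OF t \<open>v \<in> t\<close> a(1)] a(2) by force
  with ts b show False by blast
qed

lemma C3_common_adjacent:
  assumes t: "t \<in> T" and s: "s \<in> T" and ts: "C3_adj t s"
  shows "card (nbhd T C3_adj t \<inter> nbhd T C3_adj s) = k div 2 - 2"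
proof -
  from ts obtain v where v: "v \<in> t" "v \<in> s" and "t \<noteq> s" by (auto simp: C3_adj_def)
  then have ts_v: "t \<inter> s = {v}" using triangle_inter t s by blast
  have "nbhd T C3_adj t \<inter> nbhd T C3_adj s = triangles_at v - {t, s}"
  proof (intro equalityI subsetI)
    fix r assume "r \<in> nbhd T C3_adj t \<inter> nbhd T C3_adj s"
    then obtain a b where r: "r \<in> T" "r \<noteq> t" "r \<noteq> s" and ab: "a \<in> r \<inter> t" "b \<in> r \<inter> s"
      by (auto simp: C3_nbhd)
    have "v \<in> r"
    proof (rule ccontr)
      assume "v \<notin> r"
      then have "a \<noteq> v" "b \<noteq> v" "a \<noteq> b" using ab ts_v by auto
      then show False
        using no_edge_between_touching_triangles[OF t s ts_v] triangle_adj[OF r(1)] ab by blast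
    qed
    with r show "r \<in> triangles_at v - {t, s}" by (simp add: triangles_at_def)
  qed (use v in \<open>auto simp: C3_nbhd triangles_at_def\<close>)
  moreover have "{t, s} \<subseteq> triangles_at v" using t s v by (simp add: triangles_at_def)
  ultimately show ?thesis
    using \<open>t \<noteq> s\<close> by (simp add: card_Diff_subset card_triangles_at_eq)
qed

lemma C3_common_neighbour_of_disjoint:
  assumes t: "t \<in> T" and s: "s \<in> T" and ts: "t \<inter> s = {}"
    and r: "r \<in> nbhd T C3_adj t \<inter> nbhd T C3_adj s" "b \<in> r \<inter> s"
  shows "\<exists>a. r \<inter> t = {a} \<and> r \<inter> s = {b} \<and> E a b"
proof -
  from r obtain a where "r \<in> T" "r \<noteq> t" "r \<noteq> s" "a \<in> r \<inter> t" by (auto simp: C3_nbhd)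
  with r t s ts show ?thesis by (metis Int_iff disjoint_iff triangle_adj triangle_inter)
qed

lemma C3_common_neighbours_of_disjoint_eq:
  assumes t: "t \<in> T" and s: "s \<in> T" and ts: "t \<inter> s = {}"
    and r: "r1 \<in> nbhd T C3_adj t \<inter> nbhd T C3_adj s" "r2 \<in> nbhd T C3_adj t \<inter> nbhd T C3_adj s"
    and b: "b \<in> r1 \<inter> s" "b \<in> r2 \<inter> s"
  shows "r1 = r2"
proof -
  obtain a1 a2 where "r1 \<inter> t = {a1}" "E a1 b" "r2 \<inter> t = {a2}" "E a2 b"
    using C3_common_neighbour_of_disjoint[OF t s ts] r b by meson
  moreover from calculation have "a1 \<in> t" "a2 \<in> t" "b \<notin> t" using b ts by blast+
  moreover from calculation have "a1 = a2" using adj_to_unique[OF t, of b a1 a2] by simp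
  moreover have "r1 \<in> T" "r2 \<in> T" "a1 \<noteq> b"
    using r \<open>E a1 b\<close> by (auto simp: C3_nbhd)
  ultimately show "r1 = r2"
    using triangle_eq[of r1 a1 b] triangle_eq[of r2 a1 b] b by auto
qed

lemma C3_common_disjoint:
  assumes t: "t \<in> T" and s: "s \<in> T" and ts: "t \<inter> s = {}"
  shows "card (nbhd T C3_adj t \<inter> nbhd T C3_adj s) = card {b \<in> s. adj_to t b}"
proof -
  let ?R = "nbhd T C3_adj t \<inter> nbhd T C3_adj s"
  have meet: "r \<inter> s = {the_elem (r \<inter> s)}" "adj_to t (the_elem (r \<inter> s))" if r: "r \<in> ?R" for r
  proof -
    obtain b where "b \<in> r \<inter> s" using r by (auto simp: C3_nbhd)
    with C3_common_neighbour_of_disjoint[OF t s ts r] obtain a where "r \<inter> t = {a}" "r \<inter> s = {b}" "E a b"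
      by blast
    then show "r \<inter> s = {the_elem (r \<inter> s)}" "adj_to t (the_elem (r \<inter> s))" by (auto simp: adj_to_def)
  qed
  have "bij_betw (\<lambda>r. the_elem (r \<inter> s)) ?R {b \<in> s. adj_to t b}"
  proof (rule bij_betw_imageI)
    show "inj_on (\<lambda>r. the_elem (r \<inter> s)) ?R"
    proof (rule inj_onI)
      fix r1 r2 assume r: "r1 \<in> ?R" "r2 \<in> ?R" and eq: "the_elem (r1 \<inter> s) = the_elem (r2 \<inter> s)"
      then have "the_elem (r1 \<inter> s) \<in> r1 \<inter> s" "the_elem (r1 \<inter> s) \<in> r2 \<inter> s"
        using meet(1)[OF r(1)] meet(1)[OF r(2)] by auto
      then show "r1 = r2" by (rule C3_common_neighbours_of_disjoint_eq[OF t s ts r])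
    qed
    show "(\<lambda>r. the_elem (r \<inter> s)) ` ?R = {b \<in> s. adj_to t b}"
    proof (intro equalityI subsetI)
      fix b assume "b \<in> (\<lambda>r. the_elem (r \<inter> s)) ` ?R"
      with meet show "b \<in> {b \<in> s. adj_to t b}" by blast
    next
      fix b assume "b \<in> {b \<in> s. adj_to t b}"
      then obtain a where b: "b \<in> s" and a: "a \<in> t" "E a b" by (auto simp: adj_to_def)
      let ?r = "{a, b, third a b}"
      have "?r \<in> T" using triangle_of_edge[OF a(2)] .
      moreover have "a \<notin> s" "b \<notin> t" using a b ts by auto
      ultimately have "?r \<in> ?R" using a b by (auto simp: C3_nbhd)
      moreover have "?r \<inter> s = {b}"
        using triangle_inter[OF \<open>?r \<in> T\<close> s] b \<open>a \<notin> s\<close> by blast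
      ultimately show "b \<in> (\<lambda>r. the_elem (r \<inter> s)) ` ?R"
        by (metis (no_types, lifting) image_eqI the_elem_eq)
    qed
  qed
  then show ?thesis by (rule bij_betw_same_card)
qed

lemma degree_ge_2_if_triangle:
  assumes "t \<in> T"
  shows "k \<ge> 2"
proof -
  obtain a where "a \<in> t" using assms card_triangle by fastforce
  then have "t \<in> triangles_at a" using assms by (simp add: triangles_at_def)
  then have "card (triangles_at a) \<ge> 1"
    by (metis One_nat_def Suc_leI card_gt_0_iff empty_iff finite)
  then show ?thesis using card_triangles_at[of a] by linarith
qed

lemma card_nbhd_diff_triangle:
  assumes t: "t \<in> T" and a: "a \<in> t"
  shows "card (N a - t) = k - 2"
proof -
  have "N a \<inter> t = t - {a}" using triangle_adj[OF t] a by auto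
  then have "card (N a \<inter> t) = 2" using a card_triangle[OF t] by simp
  then show ?thesis using card_Diff_subset_Int[of "N a" t] by (simp add: card_N)
qed

lemma card_adj_to_outside:
  assumes t: "t \<in> T"
  shows "card {x. x \<notin> t \<and> adj_to t x} = 3 * (k - 2)"
proof -
  have "{x. x \<notin> t \<and> adj_to t x} = (\<Union>a\<in>t. N a - t)"
    by (auto simp: adj_to_def)
  also have "card \<dots> = (\<Sum>a\<in>t. card (N a - t))"
    by (rule card_UN_disjoint) (auto dest: adj_to_unique[OF t])
  also have "\<dots> = (\<Sum>a\<in>t. k - 2)"
    using card_nbhd_diff_triangle[OF t] by simp
  finally show ?thesis using card_triangle[OF t] by simp
qed

lemma covering_iff:
  assumes t: "t \<in> T"
  shows "(\<forall>x. x \<notin> t \<longrightarrow> adj_to t x) \<longleftrightarrow> n = 3 * k - 3"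
proof -
  let ?C = "t \<union> {x. x \<notin> t \<and> adj_to t x}"
  have "card ?C = 3 * k - 3"
    using card_triangle[OF t] card_adj_to_outside[OF t] degree_ge_2_if_triangle[OF t]
    by (subst card_Un_disjoint) auto
  moreover have "(\<forall>x. x \<notin> t \<longrightarrow> adj_to t x) \<longleftrightarrow> ?C = UNIV" by auto
  moreover have "?C = UNIV \<longleftrightarrow> card ?C = n"
    using card_subset_eq[of UNIV ?C] by (auto simp: card_UNIV_eq)
  ultimately show ?thesis by (simp add: eq_commute)
qed

lemma C3_srg_if_covering:
  assumes "n = 3 * k - 3"
  shows "srg T C3_adj (card T) (3 * (k div 2 - 1)) (k div 2 - 2) 3"
  unfolding srg_def
proof (intro conjI ballI impI)
  show "simple_graph T C3_adj" by (auto simp: simple_graph_def C3_adj_def)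
  fix t assume t: "t \<in> T"
  show "card (nbhd T C3_adj t) = 3 * (k div 2 - 1)" by (rule C3_degree[OF t])
  fix s assume s: "s \<in> T"
  show "card (nbhd T C3_adj t \<inter> nbhd T C3_adj s) = k div 2 - 2" if "C3_adj t s"
    using C3_common_adjacent[OF t s that] .
  show "card (nbhd T C3_adj t \<inter> nbhd T C3_adj s) = 3" if "t \<noteq> s" "\<not> C3_adj t s"
  proof -
    have ts: "t \<inter> s = {}" using that by (simp add: C3_adj_def)
    then have "{b \<in> s. adj_to t b} = s" using covering_iff[OF t] assms by blast
    then show ?thesis using C3_common_disjoint[OF t s ts] card_triangle[OF s] by simp
  qed
qed simp

lemma card_nbhd_adj_to:
  assumes t: "t \<in> T" and x: "x \<notin> t"
  shows "card {y \<in> N x. y \<notin> t \<and> adj_to t y} = (\<Sum>b\<in>t. card (N x \<inter> N b - t))"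
proof -
  have "{y \<in> N x. y \<notin> t \<and> adj_to t y} = (\<Union>b\<in>t. N x \<inter> N b - t)"
    by (auto simp: adj_to_def)
  also have "card \<dots> = (\<Sum>b\<in>t. card (N x \<inter> N b - t))"
    by (rule card_UN_disjoint) (auto dest: adj_to_unique[OF t])
  finally show ?thesis .
qed

lemma card_nbhd_adj_to_far:
  assumes t: "t \<in> T" and x: "x \<notin> t" "\<not> adj_to t x"
  shows "card {y \<in> N x. y \<notin> t \<and> adj_to t y} = 3 * \<mu>"
proof -
  have "card (N x \<inter> N b - t) = \<mu>" if "b \<in> t" for b
  proof -
    have "N x \<inter> N b - t = N x \<inter> N b" using x that by (auto simp: adj_to_def adj_sym)
    moreover have "x \<noteq> b" "\<not> E x b" using x that by (auto simp: adj_to_def adj_sym)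
    ultimately show ?thesis using card_common_neighbours[of x b] by simp
  qed
  then show ?thesis using card_nbhd_adj_to[OF t x(1)] card_triangle[OF t] by simp
qed

lemma third_notin_triangle:
  assumes t: "t \<in> T" and a: "a \<in> t" and x: "x \<notin> t" "E a x"
  shows "third x a \<notin> t"
proof
  assume "third x a \<in> t"
  moreover have "E x a" using x(2) by (simp add: adj_sym)
  moreover from this have "E (third x a) x" using third_adj(1) by (simp add: adj_sym)
  ultimately have "third x a = a" using adj_to_unique[OF t x(1) _ a _ x(2)] by blast
  with third_neq[OF \<open>E x a\<close>] show False by simp
qed

lemma card_common_nbhd_near_vertex:
  assumes t: "t \<in> T" and a: "a \<in> t" and x: "x \<notin> t" "E a x" and b: "b \<in> t" "b \<noteq> a"
  shows "card (N x \<inter> N b - t) = \<mu> - 1"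
proof -
  have "\<not> E x b" using adj_to_unique[OF t x(1) a b(1) x(2)] b(2) by (auto simp: adj_sym)
  then have "card (N x \<inter> N b) = \<mu>" using card_common_neighbours[of x b] b x(1) by auto
  moreover have "N x \<inter> N b \<inter> t = {a}"
  proof (intro equalityI subsetI)
    fix c assume "c \<in> N x \<inter> N b \<inter> t"
    then have "c \<in> t" "E c x" by (simp_all add: adj_sym)
    then show "c \<in> {a}" using adj_to_unique[OF t x(1) _ a _ x(2)] by blast
  next
    fix c assume "c \<in> {a}"
    then show "c \<in> N x \<inter> N b \<inter> t" using x(2) triangle_adj[OF t b(1) a] b(2) a by (simp add: adj_sym)
  qed
  ultimately show ?thesis by (simp add: card_Diff_subset_Int Diff_Int_distrib2)
qed

lemma card_nbhd_adj_to_near: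
  assumes t: "t \<in> T" and a: "a \<in> t" and x: "x \<notin> t" "E a x"
  shows "card {y \<in> N x. y \<notin> t \<and> adj_to t y} = 1 + 2 * (\<mu> - 1)"
proof -
  have xa: "E x a" using x(2) by (simp add: adj_sym)
  have "N x \<inter> N a - t = {third x a}"
  proof -
    have "third x a \<notin> t" by (rule third_notin_triangle[OF t a x])
    moreover have "N x \<inter> N a = {third x a}"
    proof (intro equalityI subsetI)
      fix y assume "y \<in> N x \<inter> N a"
      then show "y \<in> {third x a}" using third_unique[OF xa, of y] by simp
    qed (simp add: third_adj[OF xa])
    ultimately show ?thesis by blast
  qed
  moreover have "card (N x \<inter> N b - t) = \<mu> - 1" if "b \<in> t" "b \<noteq> a" for b
    using card_common_nbhd_near_vertex[OF t a x] that .
  ultimately have "(\<Sum>b\<in>t. card (N x \<inter> N b - t)) = 1 + (\<Sum>b\<in>t - {a}. \<mu> - 1)"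
    using a by (simp add: sum.remove)
  also have "\<dots> = 1 + 2 * (\<mu> - 1)"
    using a card_triangle[OF t] by simp
  finally show ?thesis using card_nbhd_adj_to[OF t x(1)] by simp
qed

(* The neighbours of x outside t that are adjacent to t are counted once over the vertices of t
   and once over the triangles through x, which are disjoint from t or contain the unique
   neighbour of x in t. *)
lemma far_vertex_equation:
  assumes C: "\<And>s. s \<in> T \<Longrightarrow> t \<inter> s = {} \<Longrightarrow> card {b \<in> s. adj_to t b} = c"
    and t: "t \<in> T" and x: "x \<notin> t" "\<not> adj_to t x" and k: "k \<ge> 1"
  shows "c * k = 6 * \<mu>" and "c \<le> 2"
proof -
  have r: "card {b \<in> r - {x}. b \<notin> t \<and> adj_to t b} = c" if r: "r \<in> triangles_at x" for r
  proof -
    have "t \<inter> r = {}"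
    proof (rule ccontr)
      assume "t \<inter> r \<noteq> {}"
      then obtain b where "b \<in> t" "b \<in> r" by blast
      moreover have "x \<in> r" "r \<in> T" "b \<noteq> x"
        using r \<open>b \<in> t\<close> x(1) by (auto simp: triangles_at_def)
      ultimately have "E b x" using triangle_adj by blast
      with \<open>b \<in> t\<close> x(2) show False by (auto simp: adj_to_def)
    qed
    moreover have "{b \<in> r - {x}. b \<notin> t \<and> adj_to t b} = {b \<in> r. adj_to t b}"
      using calculation x(2) by auto
    ultimately show ?thesis using C r by (simp add: triangles_at_def)
  qed
  have "3 * \<mu> = c * card (triangles_at x)"
    using card_nbhd_adj_to_far[OF t x] card_nbhd_filter[of x "\<lambda>y. y \<notin> t \<and> adj_to t y"] r by simp
  moreover have "c * k = 2 * (c * card (triangles_at x))"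
    by (subst card_triangles_at[of x, symmetric]) (simp add: ac_simps)
  ultimately show "c * k = 6 * \<mu>" by linarith
  have "triangles_at x \<noteq> {}" using card_triangles_at[of x] k by auto
  then obtain r where r0: "r \<in> triangles_at x" by blast
  then have "c = card {b \<in> r - {x}. b \<notin> t \<and> adj_to t b}" using r by simp
  also have "\<dots> \<le> card (r - {x})" by (rule card_mono) auto
  also have "\<dots> = 2" using r0 by (simp add: triangles_at_def card_triangle)
  finally show "c \<le> 2" .
qed

lemma triangle_at_near_vertex_disjoint:
  assumes t: "t \<in> T" and a: "a \<in> t" and x: "x \<notin> t" "E a x"
    and r: "r \<in> triangles_at x" "r \<noteq> {x, a, third x a}"
  shows "t \<inter> r = {}"
proof (rule ccontr)
  assume "t \<inter> r \<noteq> {}"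
  then obtain b where b: "b \<in> t" "b \<in> r" by blast
  have rT: "r \<in> T" "x \<in> r" using r by (auto simp: triangles_at_def)
  then have "E b x" using triangle_adj[OF rT(1) b(2) rT(2)] b(1) x(1) by auto
  then have "b = a" using adj_to_unique[OF t x(1) b(1) a _ x(2)] by simp
  moreover have "x \<noteq> a" using x by auto
  ultimately have "r = {x, a, third x a}" using triangle_eq[OF rT(1) rT(2), of a] b by simp
  with r show False by simp
qed

lemma near_vertex_equation:
  assumes C: "\<And>s. s \<in> T \<Longrightarrow> t \<inter> s = {} \<Longrightarrow> card {b \<in> s. adj_to t b} = c"
    and t: "t \<in> T" and a: "a \<in> t" and x: "x \<notin> t" "E a x"
  shows "4 * (\<mu> - 1) = (c - 1) * (k - 2)"
proof -
  have xa: "E x a" using x(2) by (simp add: adj_sym)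
  define r0 where "r0 = {x, a, third x a}"
  have r0: "r0 \<in> triangles_at x" using triangle_of_edge[OF xa] by (simp add: r0_def triangles_at_def)
  have "r0 - {x} = {a, third x a}" using xa third_neq[OF xa] by (auto simp: r0_def)
  moreover have "adj_to t (third x a)" using a third_adj(2)[OF xa] by (auto simp: adj_to_def)
  ultimately have "{b \<in> r0 - {x}. b \<notin> t \<and> adj_to t b} = {third x a}"
    using third_notin_triangle[OF t a x] a by auto
  then have card_r0: "card {b \<in> r0 - {x}. b \<notin> t \<and> adj_to t b} = 1" by simp
  have card_r: "card {b \<in> r - {x}. b \<notin> t \<and> adj_to t b} = c - 1" if r: "r \<in> triangles_at x - {r0}" for r
  proof -
    have rT: "r \<in> T" "x \<in> r" using r by (auto simp: triangles_at_def)
    have "t \<inter> r = {}" using triangle_at_near_vertex_disjoint[OF t a x] r by (simp add: r0_def)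
    then have "{b \<in> r - {x}. b \<notin> t \<and> adj_to t b} = {b \<in> r. adj_to t b} - {x}" by auto
    moreover have "x \<in> {b \<in> r. adj_to t b}" using rT(2) a x(2) by (auto simp: adj_to_def)
    ultimately show ?thesis using C[OF rT(1) \<open>t \<inter> r = {}\<close>] by simp
  qed
  have "1 + 2 * (\<mu> - 1) = (\<Sum>r\<in>triangles_at x. card {b \<in> r - {x}. b \<notin> t \<and> adj_to t b})"
    using card_nbhd_adj_to_near[OF t a x] card_nbhd_filter[of x "\<lambda>y. y \<notin> t \<and> adj_to t y"] by simp
  also have "\<dots> = 1 + (\<Sum>r\<in>triangles_at x - {r0}. c - 1)"
    using r0 card_r0 card_r by (simp add: sum.remove)
  also have "\<dots> = 1 + (card (triangles_at x) - 1) * (c - 1)"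
    using r0 by simp
  finally have "2 * (\<mu> - 1) = (card (triangles_at x) - 1) * (c - 1)" by simp
  moreover have "k - 2 = 2 * (card (triangles_at x) - 1)" using card_triangles_at[of x] by simp
  then have "(c - 1) * (k - 2) = 2 * ((card (triangles_at x) - 1) * (c - 1))" by simp
  ultimately show ?thesis by linarith
qed

lemma card_adj_non_neighbours_of_both:
  assumes xy: "x \<noteq> y" "\<not> E x y" and w: "E x w" "E y w"
  shows "card {z \<in> non_neighbours_of_both x y. E z w} = k - 4"
proof -
  have wx: "E w x" and wy: "E w y" using w by (simp_all add: adj_sym)
  have "{z \<in> non_neighbours_of_both x y. E z w} = N w - {x, y, third w x, third w y}"
  proof (intro equalityI subsetI)
    fix z assume "z \<in> {z \<in> non_neighbours_of_both x y. E z w}"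
    then show "z \<in> N w - {x, y, third w x, third w y}"
      using third_adj[OF wx] third_adj[OF wy] by (auto simp: non_neighbours_of_both_def adj_sym)
  next
    fix z assume z: "z \<in> N w - {x, y, third w x, third w y}"
    then have "\<not> E x z" "\<not> E y z"
      using third_unique[OF wx, of z] third_unique[OF wy, of z] by (auto simp: adj_sym)
    with z show "z \<in> {z \<in> non_neighbours_of_both x y. E z w}" by (auto simp: non_neighbours_of_both_def adj_sym)
  qed
  moreover have "{x, y, third w x, third w y} \<subseteq> N w"
    using wx wy third_adj[OF wx] third_adj[OF wy] by simp
  moreover have "card {x, y, third w x, third w y} = 4"
  proof -
    have "third w x \<noteq> y" "third w y \<noteq> x" using third_adj[OF wx] third_adj[OF wy] xy(2) by (auto simp: adj_sym)
    moreover have "third w x \<noteq> third w y" using third_involution[OF wx] third_involution[OF wy] xy(1) by metis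
    ultimately show ?thesis using xy(1) third_neq[OF wx] third_neq[OF wy] by simp
  qed
  ultimately show ?thesis by (simp add: card_Diff_subset card_N)
qed

lemma card_common_adj_non_neighbours_of_both:
  assumes xy: "x \<noteq> y" "\<not> E x y" and w: "E x w" "E y w" "E x w'" "E y w'" "w \<noteq> w'"
  shows "card {z \<in> non_neighbours_of_both x y. E z w \<and> E z w'} = \<mu> - 2"
proof -
  have "\<not> E w w'"
  proof
    assume "E w w'"
    moreover have "E w x" "E w' x" "E w y" "E w' y" using w by (simp_all add: adj_sym)
    ultimately have "third w w' = x" "third w w' = y" by (metis third_unique)+
    with xy show False by simp
  qed
  then have "card (N w \<inter> N w') = \<mu>" using card_common_neighbours[of w w'] w(5) by simp
  moreover have "{z \<in> non_neighbours_of_both x y. E z w \<and> E z w'} = N w \<inter> N w' - {x, y}"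
  proof (intro equalityI subsetI)
    fix z assume "z \<in> N w \<inter> N w' - {x, y}"
    then have z: "E w z" "E w' z" "z \<noteq> x" "z \<noteq> y" by auto
    have "\<not> E x z" using third_unique[of x z w] third_unique[of x z w'] z w by (auto simp: adj_sym)
    moreover have "\<not> E y z" using third_unique[of y z w] third_unique[of y z w'] z w by (auto simp: adj_sym)
    ultimately show "z \<in> {z \<in> non_neighbours_of_both x y. E z w \<and> E z w'}"
      using z by (auto simp: non_neighbours_of_both_def adj_sym)
  qed (auto simp: non_neighbours_of_both_def adj_sym)
  moreover have "{x, y} \<subseteq> N w \<inter> N w'" using w by (simp add: adj_sym)
  ultimately show ?thesis using xy(1) by (simp add: card_Diff_subset)
qed

lemma sum_card_common_adj_non_neighbours_of_both:
  assumes xy: "x \<noteq> y" "\<not> E x y" and w: "w \<in> N x \<inter> N y"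
  shows "(\<Sum>w'\<in>N x \<inter> N y. card {z \<in> non_neighbours_of_both x y. E z w \<and> E z w'}) =
    (k - 4) + (\<mu> - 1) * (\<mu> - 2)"
proof -
  let ?V = "non_neighbours_of_both x y" and ?W = "N x \<inter> N y"
  have "(\<Sum>w'\<in>?W. card {z \<in> ?V. E z w \<and> E z w'}) =
      card {z \<in> ?V. E z w} + (\<Sum>w'\<in>?W - {w}. card {z \<in> ?V. E z w \<and> E z w'})"
    using w by (simp add: sum.remove)
  also have "\<dots> = (k - 4) + (\<Sum>w'\<in>?W - {w}. \<mu> - 2)"
  proof -
    have "card {z \<in> ?V. E z w} = k - 4" using w card_adj_non_neighbours_of_both[OF xy] by simp
    moreover have "(\<Sum>w'\<in>?W - {w}. card {z \<in> ?V. E z w \<and> E z w'}) = (\<Sum>w'\<in>?W - {w}. \<mu> - 2)"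
      using w by (intro sum.cong) (auto intro!: card_common_adj_non_neighbours_of_both[OF xy])
    ultimately show ?thesis by simp
  qed
  also have "\<dots> = (k - 4) + (\<mu> - 1) * (\<mu> - 2)"
    using w xy card_common_neighbours[of x y] by simp
  finally show ?thesis .
qed

lemma variance_bound:
  assumes xy: "x \<noteq> y" "\<not> E x y"
  shows "(\<mu> * (k - 4))\<^sup>2 \<le> \<mu> * ((k - 4) + (\<mu> - 1) * (\<mu> - 2)) * (n - 2 - (2 * k - \<mu>))"
proof -
  let ?V = "non_neighbours_of_both x y" and ?W = "N x \<inter> N y"
  define d where "d z = card {w \<in> ?W. E z w}" for z
  \<comment> \<open>the first two moments of d over ?V, then Cauchy-Schwarz\<close>
  have card_W: "card ?W = \<mu>" using xy card_common_neighbours[of x y] by simp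
  have "(\<Sum>z\<in>?V. d z) = (\<Sum>w\<in>?W. card {z \<in> ?V. E z w})"
    unfolding d_def by (rule sum_card_filter_swap) simp_all
  also have "\<dots> = \<mu> * (k - 4)"
    using card_adj_non_neighbours_of_both[OF xy] card_W by simp
  finally have sum_d: "(\<Sum>z\<in>?V. d z) = \<mu> * (k - 4)" .
  have "(\<Sum>z\<in>?V. (d z)\<^sup>2) = (\<Sum>w\<in>?W. \<Sum>w'\<in>?W. card {z \<in> ?V. E z w \<and> E z w'})"
    unfolding d_def by (rule sum_card_filter_square) simp_all
  also have "\<dots> = (\<Sum>w\<in>?W. (k - 4) + (\<mu> - 1) * (\<mu> - 2))"
    using sum_card_common_adj_non_neighbours_of_both[OF xy] by simp
  also have "\<dots> = \<mu> * ((k - 4) + (\<mu> - 1) * (\<mu> - 2))" using card_W by simp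
  finally have sum_d2: "(\<Sum>z\<in>?V. (d z)\<^sup>2) = \<mu> * ((k - 4) + (\<mu> - 1) * (\<mu> - 2))" .
  have "(\<Sum>z\<in>?V. real (d z))\<^sup>2 \<le> (\<Sum>z\<in>?V. (real (d z))\<^sup>2) * card ?V"
    by (rule sum_squared_le_sum_of_squares)
  then have "real ((\<Sum>z\<in>?V. d z)\<^sup>2) \<le> real ((\<Sum>z\<in>?V. (d z)\<^sup>2) * card ?V)"
    by simp
  then show ?thesis
    using sum_d sum_d2 card_non_neighbours_of_both[OF xy] by (simp only: of_nat_le_iff)
qed

lemma degree_ge_3:
  assumes "\<mu> \<ge> 1" "u \<noteq> v" "\<not> E u v"
  shows "k \<ge> 3"
proof (rule ccontr)
  assume "\<not> k \<ge> 3"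
  have "v \<in> {w. w \<noteq> u \<and> \<not> E u w}" using assms by auto
  then have "card {w. w \<noteq> u \<and> \<not> E u w} \<ge> 1"
    by (metis One_nat_def Suc_leI card_gt_0_iff empty_iff finite)
  then have "int n - int k - 1 \<ge> 1" using card_non_neighbours[of u] by linarith
  then have "1 * 1 \<le> (int n - int k - 1) * int \<mu>" using assms(1) by (intro mult_mono) auto
  also have "\<dots> = int k * (int k - 2)" using srg_parameter_identity by simp
  finally have "int k * (int k - 2) \<ge> 1" by simp
  moreover have "k = 0 \<or> k = 1 \<or> k = 2" using \<open>\<not> k \<ge> 3\<close> by auto
  ultimately show False by auto
qed

lemma covering_parameters:
  assumes cov: "n = 3 * k - 3" and \<mu>: "\<mu> \<ge> 1" and uv: "u \<noteq> v" "\<not> E u v"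
  shows "(n, k, \<mu>) \<in> {(9, 4, 2), (15, 6, 3), (27, 10, 5)}"
proof -
  have k3: "k \<ge> 3" by (rule degree_ge_3[OF \<mu> uv])
  have "int k * (int k - 2) = (int n - int k - 1) * int \<mu>" using srg_parameter_identity by simp
  also have "\<dots> = (2 * int \<mu>) * (int k - 2)" using cov k3 by (simp add: algebra_simps)
  finally have k: "k = 2 * \<mu>" using k3 by simp
  then have n: "n = 6 * \<mu> - 3" using cov by simp
  have "\<mu> \<le> 5" using variance_bound_arith variance_bound[OF uv] unfolding k n by blast
  moreover have "\<mu> \<ge> 2" using k3 k by simp
  moreover have "\<mu> \<noteq> 4" using no_srg_21_8_1_4[of E] srg k n by auto
  ultimately have "\<mu> = 2 \<or> \<mu> = 3 \<or> \<mu> = 5" by auto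
  then show ?thesis using k n by auto
qed

lemma C3_strongly_regular_far_vertex:
  assumes sr: "strongly_regular T C3_adj" and \<mu>: "\<mu> \<ge> 1" and k3: "k \<ge> 3"
    and t: "t \<in> T" and x: "x \<notin> t" "\<not> adj_to t x"
  shows "k = 6 \<and> (\<mu> = 1 \<or> \<mu> = 2)"
proof -
  from sr obtain n' k' l' m' where sr': "srg T C3_adj n' k' l' m'"
    by (auto simp: strongly_regular_def)
  have C: "card {b \<in> s. adj_to t b} = m'" if s: "s \<in> T" "t \<inter> s = {}" for s
  proof -
    have "t \<noteq> s" using s card_triangle[OF t] by auto
    moreover have "\<not> C3_adj t s" using s(2) by (simp add: C3_adj_def)
    ultimately have "card (nbhd T C3_adj t \<inter> nbhd T C3_adj s) = m'"
      using sr' t s(1) by (simp add: srg_def)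
    then show ?thesis using C3_common_disjoint[OF t s] by simp
  qed
  obtain a where a: "a \<in> t" using t by (auto simp: mem_triangles)
  have "N a - t \<noteq> {}" using card_nbhd_diff_triangle[OF t a] k3 by fastforce
  then obtain y where y: "y \<notin> t" "E a y" by auto
  have "m' * k = 6 * \<mu>" "m' \<le> 2" using far_vertex_equation[OF C t x] k3 by auto
  moreover have "4 * (\<mu> - 1) = (m' - 1) * (k - 2)" using near_vertex_equation[OF C t a y] .
  ultimately show ?thesis using far_near_arith \<mu> by blast
qed

lemma covering_if_C3_strongly_regular:
  assumes sr: "strongly_regular T C3_adj" and \<mu>: "\<mu> \<ge> 1" and k3: "k \<ge> 3"
  shows "n = 3 * k - 3"
proof (rule ccontr)
  assume not_cov: "n \<noteq> 3 * k - 3"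
  fix v :: 'a
  obtain w where "E v w" using card_N[of v] k3 by fastforce
  then have t: "{v, w, third v w} \<in> T" by (rule triangle_of_edge)
  then obtain x where "x \<notin> {v, w, third v w}" "\<not> adj_to {v, w, third v w} x"
    using covering_iff not_cov by blast
  with sr \<mu> k3 t have k: "k = 6 \<and> (\<mu> = 1 \<or> \<mu> = 2)" by (rule C3_strongly_regular_far_vertex)
  moreover have "int k * (int k - 2) = (int n - int k - 1) * int \<mu>" using srg_parameter_identity by simp
  ultimately have "n = 31 \<and> \<mu> = 1 \<or> n = 19 \<and> \<mu> = 2" by auto
  then show False using srg no_srg_31_6_1_1[of E] no_srg_19_6_1_2[of E] k by auto
qed

end

theorem theorem15:
  fixes E :: "'a::finite \<Rightarrow> 'a \<Rightarrow> bool" and n k \<mu> :: nat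
  assumes "srg UNIV E n k 1 \<mu>"
    and "\<not> boring E"
  shows "strongly_regular (triangles UNIV E) C3_adj \<longleftrightarrow>
           (n, k, \<mu>) \<in> {(9, 4, 2), (15, 6, 3), (27, 10, 5)}"
proof -
  interpret srg_one E n k \<mu> by unfold_locales (rule assms(1))
  obtain u v where \<mu>: "\<mu> \<ge> 1" and uv: "u \<noteq> v" "\<not> E u v"
    using boring_if_mu_eq_0_or_complete assms(2) by fastforce
  have "strongly_regular T C3_adj \<longleftrightarrow> n = 3 * k - 3"
    using covering_if_C3_strongly_regular[OF _ \<mu> degree_ge_3[OF \<mu> uv]] C3_srg_if_covering
    by (auto simp: strongly_regular_def)
  also have "\<dots> \<longleftrightarrow> (n, k, \<mu>) \<in> {(9, 4, 2), (15, 6, 3), (27, 10, 5)}"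
    using covering_parameters[OF _ \<mu> uv] by auto
  finally show ?thesis .
qed

end
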